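(* Let $\mathcal{H}$ be an $n$-dimensional (real or complex) Hilbert space, let $F=\{f_i\}_{i=1}^N$ be a frame for $\mathcal{H}$, and let $\{q_i\}_{i=1}^N$ be the weight number sequence associated with a probability sequence $\{p_i\}_{i=1}^N$. Then the set $\Delta_F^{(1)}$ of all 1-erasure probabilistic averaged spectrally optimal dual frames (PASOD-frames) of $F$ is convex.
   Context: A finite sequence $F=\{f_i\}_{i=1}^N$ in $\mathcal{H}$ is a frame if there are $A,B>0$ with $A\|f\|^2\le\sum_{i=1}^N|\langle f,f_i\rangle|^2\le B\|f\|^2$ for all $f\in\mathcal{H}$. A frame $G=\{g_i\}_{i=1}^N$ is a dual frame of $F$ if $f=\sum_{i=1}^N\langle f,f_i\rangle g_i=\sum_{i=1}^N\langle f,g_i\rangle f_i$ for all $f\in\mathcal{H}$. A probability sequence is $\{p_i\}_{i=1}^N$ with $0\le p_i\le 1$ and $\sum_{i=1}^N p_i=1$; its weight numbers are $q_i=\frac{\sum_{j=1}^N p_j}{\sum_{j=1}^N p_j-p_i}\cdot\frac{N-1}{n}$. For $\Lambda\subseteq\{1,\dots,N\}$ and a dual $G$ of $F$, the error operator is $E_{\Lambda,(F,G)}f=\sum_{i\in\Lambda}q_i\langle f,f_i\rangle g_i$. Define $\mathcal{A}_P^{(1)}(F,G)=\max_{|\Lambda|=1}\frac{\|E_{\Lambda,(F,G)}\|+\rho(E_{\Lambda,(F,G)})}{2}$, where $\|\cdot\|$ is the operator norm and $\rho$ the spectral radius, and $\mathcal{A}_P^{(1)}(F)=\inf\{\mathcal{A}_P^{(1)}(F,G):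 G \text{ a dual of } F\}$. A dual $G$ of $F$ is a 1-erasure PASOD-frame of $F$ if $\mathcal{A}_P^{(1)}(F,G)=\mathcal{A}_P^{(1)}(F)$; $\Delta_F^{(1)}$ denotes the set of these. *)

theory Defs
  imports Complex_Main "Jordan_Normal_Form.Spectral_Radius"
begin

text \<open>The n-dimensional Hilbert space H over the scalar field K (K = Reals for the real
  case, K = UNIV for the complex case) is modelled as the K-valued vectors of dimension n,
  embedded in complex n-vectors, with the standard inner product.\<close>

definition hspace :: "complex set \<Rightarrow> nat \<Rightarrow> complex vec set" where
  "hspace K n = {f. f \<in> carrier_vec n \<and> (\<forall>j<n. f $ j \<in> K)}"

definition hinner :: "nat \<Rightarrow> complex vec \<Rightarrow> complex vec \<Rightarrow> complex" where
  "hinner n f g = (\<Sum>j<n. f $ j * cnj (g $ j))"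

definition hnorm :: "nat \<Rightarrow> complex vec \<Rightarrow> real" where
  "hnorm n f = sqrt (\<Sum>j<n. (cmod (f $ j))\<^sup>2)"

text \<open>Finite sequences are indexed by {1..N}.\<close>
definition is_frame :: "complex set \<Rightarrow> nat \<Rightarrow> nat \<Rightarrow> (nat \<Rightarrow> complex vec) \<Rightarrow> bool" where
  "is_frame K n N F \<longleftrightarrow> (\<forall>i\<in>{1..N}. F i \<in> hspace K n) \<and>
     (\<exists>A B. A > 0 \<and> B > 0 \<and> (\<forall>f\<in>hspace K n.
        A * (hnorm n f)\<^sup>2 \<le> (\<Sum>i=1..N. (cmod (hinner n f (F i)))\<^sup>2) \<and>
        (\<Sum>i=1..N. (cmod (hinner n f (F i)))\<^sup>2) \<le> B * (hnorm n f)\<^sup>2))"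

definition vsum :: "nat \<Rightarrow> nat set \<Rightarrow> (nat \<Rightarrow> complex vec) \<Rightarrow> complex vec" where
  "vsum n I v = vec n (\<lambda>j. \<Sum>i\<in>I. v i $ j)"

definition is_dual :: "complex set \<Rightarrow> nat \<Rightarrow> nat \<Rightarrow> (nat \<Rightarrow> complex vec) \<Rightarrow> (nat \<Rightarrow> complex vec) \<Rightarrow> bool" where
  "is_dual K n N F G \<longleftrightarrow> is_frame K n N G \<and>
     (\<forall>f\<in>hspace K n. f = vsum n {1..N} (\<lambda>i. hinner n f (F i) \<cdot>\<^sub>v G i) \<and>
                     f = vsum n {1..N} (\<lambda>i. hinner n f (G i) \<cdot>\<^sub>v F i))"

definition is_prob_seq :: "nat \<Rightarrow> (nat \<Rightarrow> real) \<Rightarrow> bool" where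
  "is_prob_seq N p \<longleftrightarrow> (\<forall>i\<in>{1..N}. 0 \<le> p i \<and> p i \<le> 1) \<and> (\<Sum>i=1..N. p i) = 1"

definition weight :: "nat \<Rightarrow> nat \<Rightarrow> (nat \<Rightarrow> real) \<Rightarrow> nat \<Rightarrow> real" where
  "weight n N p i = (\<Sum>j=1..N. p j) / ((\<Sum>j=1..N. p j) - p i) * ((real N - 1) / real n)"

text \<open>Error operator E_{Lambda,(F,G)} as an n x n matrix: E f = sum_{i in Lambda} q_i <f,f_i> g_i.\<close>
definition err_op :: "nat \<Rightarrow> nat \<Rightarrow> (nat \<Rightarrow> real) \<Rightarrow> nat set \<Rightarrow> (nat \<Rightarrow> complex vec) \<Rightarrow> (nat \<Rightarrow> complex vec) \<Rightarrow> complex mat" where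
  "err_op n N p \<Lambda> F G = mat n n (\<lambda>(j,k). \<Sum>i\<in>\<Lambda>. complex_of_real (weight n N p i) * G i $ j * cnj (F i $ k))"

definition op_norm :: "complex set \<Rightarrow> nat \<Rightarrow> complex mat \<Rightarrow> real" where
  "op_norm K n E = Sup {hnorm n (E *\<^sub>v f) | f. f \<in> hspace K n \<and> hnorm n f \<le> 1}"

definition AP1 :: "complex set \<Rightarrow> nat \<Rightarrow> nat \<Rightarrow> (nat \<Rightarrow> real) \<Rightarrow> (nat \<Rightarrow> complex vec) \<Rightarrow> (nat \<Rightarrow> complex vec) \<Rightarrow> real" where
  "AP1 K n N p F G = Max {(op_norm K n (err_op n N p \<Lambda> F G) + spectral_radius (err_op n N p \<Lambda> F G)) / 2
                          | \<Lambda>. \<Lambda> \<subseteq> {1..N} \<and> card \<Lambda> = 1}"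

definition AP1_inf :: "complex set \<Rightarrow> nat \<Rightarrow> nat \<Rightarrow> (nat \<Rightarrow> real) \<Rightarrow> (nat \<Rightarrow> complex vec) \<Rightarrow> real" where
  "AP1_inf K n N p F = Inf {AP1 K n N p F G | G. is_dual K n N F G}"

definition PASOD1 :: "complex set \<Rightarrow> nat \<Rightarrow> nat \<Rightarrow> (nat \<Rightarrow> real) \<Rightarrow> (nat \<Rightarrow> complex vec) \<Rightarrow> (nat \<Rightarrow> complex vec) set" where
  "PASOD1 K n N p F = {G. is_dual K n N F G \<and> AP1 K n N p F G = AP1_inf K n N p F}"

end

theory Submission
  imports Defs "HOL-Analysis.L2_Norm"
begin

(* The dual frames of F form an affine set: both reconstruction identities are affine in G,
   every finite sequence has an upper frame bound in finite dimension, and a lower bound for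
   a dual comes from the upper bound of F by Cauchy-Schwarz. For a single erasure the error
   operator is affine in G, so its operator norm is convex in G; it is the rank-one operator
   f \<mapsto> q_i <f,f_i> g_i, whose spectral radius |q_i <g_i,f_i>| is convex in G as well.
   Hence A_P^(1)(F, -) is convex on the duals, and a convex combination of two minimisers is
   a dual whose value is at most the minimum. *)

lemma hnorm_L2: "hnorm n v = L2_set (\<lambda>j. cmod (v $ j)) {..<n}"
  unfolding hnorm_def L2_set_def by simp

lemma hnorm_nonneg: "0 \<le> hnorm n v"
  unfolding hnorm_L2 by simp

lemma hnorm_zero [simp]: "hnorm n (0\<^sub>v n) = 0"
  unfolding hnorm_def by simp

lemma hnorm_triangle:
  assumes "u \<in> carrier_vec n" "v \<in> carrier_vec n"
  shows "hnorm n (u + v) \<le> hnorm n u + hnorm n v"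
proof -
  have "hnorm n (u + v) = L2_set (\<lambda>j. cmod (u $ j + v $ j)) {..<n}"
    unfolding hnorm_L2 using assms by (intro L2_set_cong) auto
  also have "\<dots> \<le> L2_set (\<lambda>j. cmod (u $ j) + cmod (v $ j)) {..<n}"
    by (intro L2_set_mono norm_triangle_ineq) auto
  also have "\<dots> \<le> hnorm n u + hnorm n v"
    unfolding hnorm_L2 by (rule L2_set_triangle_ineq)
  finally show ?thesis .
qed

lemma hnorm_smult:
  assumes "v \<in> carrier_vec n"
  shows "hnorm n (c \<cdot>\<^sub>v v) = cmod c * hnorm n v"
proof -
  have "hnorm n (c \<cdot>\<^sub>v v) = L2_set (\<lambda>j. cmod c * cmod (v $ j)) {..<n}"
    unfolding hnorm_L2 using assms by (intro L2_set_cong) (auto simp: norm_mult)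
  also have "\<dots> = cmod c * hnorm n v"
    unfolding hnorm_L2 by (simp add: L2_set_right_distrib)
  finally show ?thesis .
qed

lemma component_le_hnorm: "j < n \<Longrightarrow> cmod (v $ j) \<le> hnorm n v"
  unfolding hnorm_L2 by (intro member_le_L2_set) auto

lemma hinner_self: "hinner n f f = of_real ((hnorm n f)\<^sup>2)"
proof -
  have "(hnorm n f)\<^sup>2 = (\<Sum>j<n. (cmod (f $ j))\<^sup>2)"
    unfolding hnorm_def by (simp add: sum_nonneg)
  then show ?thesis
    unfolding hinner_def of_real_sum by (simp add: complex_norm_square del: of_real_power)
qed

lemma hinner_cauchy_schwarz: "cmod (hinner n f g) \<le> hnorm n f * hnorm n g"
proof -
  have "cmod (hinner n f g) \<le> (\<Sum>j<n. \<bar>cmod (f $ j)\<bar> * \<bar>cmod (g $ j)\<bar>)"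
    unfolding hinner_def by (rule order_trans[OF norm_sum]) (simp add: norm_mult)
  also have "\<dots> \<le> hnorm n f * hnorm n g"
    unfolding hnorm_L2 by (rule L2_set_mult_ineq)
  finally show ?thesis .
qed

lemma index_lincomb_vec:
  assumes "u \<in> carrier_vec n" "v \<in> carrier_vec n" "j < n"
  shows "(a \<cdot>\<^sub>v u + b \<cdot>\<^sub>v v) $ j = a * u $ j + b * v $ j"
  using assms by simp

lemma hinner_lincomb_left:
  assumes "u \<in> carrier_vec n" "v \<in> carrier_vec n"
  shows "hinner n (a \<cdot>\<^sub>v u + b \<cdot>\<^sub>v v) g = a * hinner n u g + b * hinner n v g"
  unfolding hinner_def using assms
  by (simp add: sum.distrib sum_distrib_left algebra_simps)

lemma hinner_lincomb_right:
  assumes "u \<in> carrier_vec n" "v \<in> carrier_vec n"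
  shows "hinner n f (a \<cdot>\<^sub>v u + b \<cdot>\<^sub>v v) = cnj a * hinner n f u + cnj b * hinner n f v"
  unfolding hinner_def using assms
  by (simp add: sum.distrib sum_distrib_left algebra_simps)

lemma hinner_vsum_right:
  assumes "\<And>i. i \<in> I \<Longrightarrow> v i \<in> carrier_vec n"
  shows "hinner n f (vsum n I (\<lambda>i. c i \<cdot>\<^sub>v v i)) = (\<Sum>i\<in>I. cnj (c i) * hinner n f (v i))"
proof -
  have "(c i \<cdot>\<^sub>v v i) $ j = c i * v i $ j" if "i \<in> I" "j < n" for i j
    using assms[OF that(1)] that(2) by simp
  then have "hinner n f (vsum n I (\<lambda>i. c i \<cdot>\<^sub>v v i)) = (\<Sum>j<n. \<Sum>i\<in>I. f $ j * cnj (c i * v i $ j))"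
    unfolding hinner_def vsum_def by (auto simp: sum_distrib_left intro!: sum.cong)
  also have "\<dots> = (\<Sum>i\<in>I. cnj (c i) * hinner n f (v i))"
    unfolding hinner_def by (subst sum.swap) (auto simp: sum_distrib_left mult_ac intro!: sum.cong)
  finally show ?thesis .
qed

lemma hspace_carrier: "f \<in> hspace K n \<Longrightarrow> f \<in> carrier_vec n"
  unfolding hspace_def by auto

lemma zero_hspace: "0 \<in> K \<Longrightarrow> 0\<^sub>v n \<in> hspace K n"
  unfolding hspace_def by auto

lemma hspace_real_lincomb:
  assumes "K = \<real> \<or> K = UNIV" "u \<in> hspace K n" "v \<in> hspace K n"
  shows "of_real a \<cdot>\<^sub>v u + of_real b \<cdot>\<^sub>v v \<in> hspace K n"
  using assms unfolding hspace_def by auto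

lemma is_frame_hspace: "is_frame K n N F \<Longrightarrow> i \<in> {1..N} \<Longrightarrow> F i \<in> hspace K n"
  unfolding is_frame_def by auto

lemma is_frame_carrier: "is_frame K n N F \<Longrightarrow> i \<in> {1..N} \<Longrightarrow> F i \<in> carrier_vec n"
  using is_frame_hspace hspace_carrier by blast

lemma upper_frame_bound_exists:
  "\<exists>B>0. \<forall>f. (\<Sum>i\<in>I. (cmod (hinner n f (G i)))\<^sup>2) \<le> B * (hnorm n f)\<^sup>2"
proof -
  define S where "S = (\<Sum>i\<in>I. (hnorm n (G i))\<^sup>2)"
  have "0 \<le> S" unfolding S_def by (simp add: sum_nonneg)
  have "(\<Sum>i\<in>I. (cmod (hinner n f (G i)))\<^sup>2) \<le> (1 + S) * (hnorm n f)\<^sup>2" for f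
  proof -
    have "(\<Sum>i\<in>I. (cmod (hinner n f (G i)))\<^sup>2) \<le> (\<Sum>i\<in>I. (hnorm n f)\<^sup>2 * (hnorm n (G i))\<^sup>2)"
      by (intro sum_mono) (metis hinner_cauchy_schwarz norm_ge_zero power_mono power_mult_distrib)
    also have "\<dots> = S * (hnorm n f)\<^sup>2"
      unfolding S_def by (simp add: sum_distrib_left mult.commute)
    also have "\<dots> \<le> (1 + S) * (hnorm n f)\<^sup>2"
      by (simp add: algebra_simps)
    finally show ?thesis .
  qed
  moreover have "0 < 1 + S" using \<open>0 \<le> S\<close> by simp
  ultimately show ?thesis by blast
qed

lemma dual_lower_frame_bound:
  assumes F: "\<And>i. i \<in> I \<Longrightarrow> F i \<in> carrier_vec n"
    and rec: "f = vsum n I (\<lambda>i. hinner n f (G i) \<cdot>\<^sub>v F i)"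
    and B: "B > 0" and upper: "(\<Sum>i\<in>I. (cmod (hinner n f (F i)))\<^sup>2) \<le> B * (hnorm n f)\<^sup>2"
  shows "(hnorm n f)\<^sup>2 / B \<le> (\<Sum>i\<in>I. (cmod (hinner n f (G i)))\<^sup>2)"
proof -
  define h where "h = hnorm n f"
  define LG where "LG = L2_set (\<lambda>i. cmod (hinner n f (G i))) I"
  define LF where "LF = L2_set (\<lambda>i. cmod (hinner n f (F i))) I"
  have "h\<^sup>2 = cmod (hinner n f f)"
    unfolding h_def hinner_self norm_of_real by simp
  also have "hinner n f f = (\<Sum>i\<in>I. cnj (hinner n f (G i)) * hinner n f (F i))"
    by (subst (2) rec) (rule hinner_vsum_right[OF F])
  also have "cmod \<dots> \<le> (\<Sum>i\<in>I. \<bar>cmod (hinner n f (G i))\<bar> * \<bar>cmod (hinner n f (F i))\<bar>)"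
    by (rule order_trans[OF norm_sum]) (simp add: norm_mult)
  also have "\<dots> \<le> LG * LF"
    unfolding LG_def LF_def by (rule L2_set_mult_ineq)
  also have "LF \<le> sqrt B * h"
    using real_sqrt_le_mono[OF upper] B hnorm_nonneg[of n f]
    unfolding LF_def L2_set_def h_def by (simp add: real_sqrt_mult)
  then have "LG * LF \<le> LG * (sqrt B * h)"
    unfolding LG_def by (simp add: mult_left_mono)
  finally have "h * h \<le> (LG * sqrt B) * h"
    by (simp add: power2_eq_square mult_ac)
  then have "h \<le> LG * sqrt B \<or> h = 0"
    using hnorm_nonneg[of n f] unfolding h_def by (auto simp: mult_le_cancel_right)
  then have "h\<^sup>2 \<le> LG\<^sup>2 * B"
    using hnorm_nonneg[of n f] B unfolding h_def
    by (auto simp: power_mult_distrib intro: order_trans[OF power_mono])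
  then show ?thesis
    using B unfolding LG_def h_def L2_set_def by (simp add: sum_nonneg pos_divide_le_eq)
qed

lemma is_frame_of_reconstruction:
  assumes G: "\<And>i. i \<in> {1..N} \<Longrightarrow> G i \<in> hspace K n"
    and F: "is_frame K n N F"
    and rec: "\<And>f. f \<in> hspace K n \<Longrightarrow> f = vsum n {1..N} (\<lambda>i. hinner n f (G i) \<cdot>\<^sub>v F i)"
  shows "is_frame K n N G"
proof -
  obtain BF where BF: "BF > 0"
    and upper_F: "\<And>f. f \<in> hspace K n \<Longrightarrow> (\<Sum>i=1..N. (cmod (hinner n f (F i)))\<^sup>2) \<le> BF * (hnorm n f)\<^sup>2"
    using F unfolding is_frame_def by blast
  obtain BG where BG: "BG > 0"
    and upper_G: "\<And>f. (\<Sum>i=1..N. (cmod (hinner n f (G i)))\<^sup>2) \<le> BG * (hnorm n f)\<^sup>2"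
    using upper_frame_bound_exists by blast
  have lower_G: "1 / BF * (hnorm n f)\<^sup>2 \<le> (\<Sum>i=1..N. (cmod (hinner n f (G i)))\<^sup>2)"
    if "f \<in> hspace K n" for f
    using dual_lower_frame_bound[OF is_frame_carrier[OF F] rec[OF that] BF upper_F[OF that]] by simp
  moreover have "0 < 1 / BF" using BF by simp
  ultimately show ?thesis
    unfolding is_frame_def using G BG upper_G by blast
qed

lemma vsum_lincomb:
  assumes "\<And>i. i \<in> I \<Longrightarrow> u i \<in> carrier_vec n" "\<And>i. i \<in> I \<Longrightarrow> w i \<in> carrier_vec n"
  shows "vsum n I (\<lambda>i. a \<cdot>\<^sub>v u i + b \<cdot>\<^sub>v w i) = a \<cdot>\<^sub>v vsum n I u + b \<cdot>\<^sub>v vsum n I w"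
proof (rule eq_vecI)
  fix j assume "j < dim_vec (a \<cdot>\<^sub>v vsum n I u + b \<cdot>\<^sub>v vsum n I w)"
  then have j: "j < n" by (simp add: vsum_def)
  have "(\<Sum>i\<in>I. (a \<cdot>\<^sub>v u i + b \<cdot>\<^sub>v w i) $ j) = (\<Sum>i\<in>I. a * u i $ j + b * w i $ j)"
    using assms j by (intro sum.cong refl index_lincomb_vec)
  then show "vsum n I (\<lambda>i. a \<cdot>\<^sub>v u i + b \<cdot>\<^sub>v w i) $ j = (a \<cdot>\<^sub>v vsum n I u + b \<cdot>\<^sub>v vsum n I w) $ j"
    unfolding vsum_def using j by (simp add: sum.distrib sum_distrib_left)
qed (simp add: vsum_def)

lemma vsum_cong: "(\<And>i. i \<in> I \<Longrightarrow> u i = v i) \<Longrightarrow> vsum n I u = vsum n I v"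
  unfolding vsum_def by simp

lemma affine_comb_self: "a + b = 1 \<Longrightarrow> f = a \<cdot>\<^sub>v f + b \<cdot>\<^sub>v (f :: complex vec)"
  using add_smult_distrib_vec[of a b f] by simp

lemma is_dual_affine_comb:
  assumes K: "K = \<real> \<or> K = UNIV" and F: "is_frame K n N F"
    and G1: "is_dual K n N F G1" and G2: "is_dual K n N F G2" and ab: "a + b = 1"
  shows "is_dual K n N F (\<lambda>i. of_real a \<cdot>\<^sub>v G1 i + of_real b \<cdot>\<^sub>v G2 i)"
    (is "is_dual K n N F ?G")
proof -
  have G1c: "\<And>i. i \<in> {1..N} \<Longrightarrow> G1 i \<in> carrier_vec n"
    and G2c: "\<And>i. i \<in> {1..N} \<Longrightarrow> G2 i \<in> carrier_vec n"
    and Fc: "\<And>i. i \<in> {1..N} \<Longrightarrow> F i \<in> carrier_vec n"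
    using G1 G2 F is_frame_carrier unfolding is_dual_def by blast+
  have ab': "of_real a + of_real b = (1 :: complex)"
    using ab by (metis of_real_1 of_real_add)
  have synthesis: "f = vsum n {1..N} (\<lambda>i. hinner n f (F i) \<cdot>\<^sub>v ?G i)" if f: "f \<in> hspace K n" for f
  proof -
    have "hinner n f (F i) \<cdot>\<^sub>v ?G i
      = of_real a \<cdot>\<^sub>v (hinner n f (F i) \<cdot>\<^sub>v G1 i) + of_real b \<cdot>\<^sub>v (hinner n f (F i) \<cdot>\<^sub>v G2 i)"
      if "i \<in> {1..N}" for i
      using G1c[OF that] G2c[OF that] by (intro eq_vecI) (auto simp: algebra_simps)
    then have "vsum n {1..N} (\<lambda>i. hinner n f (F i) \<cdot>\<^sub>v ?G i)
      = vsum n {1..N} (\<lambda>i. of_real a \<cdot>\<^sub>v (hinner n f (F i) \<cdot>\<^sub>v G1 i) + of_real b \<cdot>\<^sub>v (hinner n f (F i) \<cdot>\<^sub>v G2 i))"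
      by (rule vsum_cong)
    also have "\<dots> = of_real a \<cdot>\<^sub>v f + of_real b \<cdot>\<^sub>v f"
      using G1c G2c f G1 G2 unfolding is_dual_def by (subst vsum_lincomb) auto
    finally show ?thesis using affine_comb_self[OF ab'] by simp
  qed
  have analysis: "f = vsum n {1..N} (\<lambda>i. hinner n f (?G i) \<cdot>\<^sub>v F i)" if f: "f \<in> hspace K n" for f
  proof -
    have "vsum n {1..N} (\<lambda>i. hinner n f (?G i) \<cdot>\<^sub>v F i)
      = vsum n {1..N} (\<lambda>i. of_real a \<cdot>\<^sub>v (hinner n f (G1 i) \<cdot>\<^sub>v F i) + of_real b \<cdot>\<^sub>v (hinner n f (G2 i) \<cdot>\<^sub>v F i))"
      using G1c G2c Fc by (intro vsum_cong eq_vecI) (auto simp: hinner_lincomb_right algebra_simps)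
    also have "\<dots> = of_real a \<cdot>\<^sub>v f + of_real b \<cdot>\<^sub>v f"
      using Fc f G1 G2 unfolding is_dual_def by (subst vsum_lincomb) auto
    finally show ?thesis using affine_comb_self[OF ab'] by simp
  qed
  have "?G i \<in> hspace K n" if "i \<in> {1..N}" for i
    using G1 G2 is_frame_hspace[OF _ that] hspace_real_lincomb[OF K] unfolding is_dual_def by blast
  then have "is_frame K n N ?G"
    using F analysis by (rule is_frame_of_reconstruction)
  then show ?thesis
    unfolding is_dual_def using analysis synthesis by blast
qed

lemma hnorm_mult_mat_vec_le:
  assumes A: "A \<in> carrier_mat n n" and f: "f \<in> carrier_vec n" "hnorm n f \<le> 1"
  shows "hnorm n (A *\<^sub>v f) \<le> (\<Sum>j<n. \<Sum>k<n. cmod (A $$ (j, k)))"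
proof -
  have "hnorm n (A *\<^sub>v f) \<le> (\<Sum>j<n. \<bar>cmod ((A *\<^sub>v f) $ j)\<bar>)"
    unfolding hnorm_L2 by (rule L2_set_le_sum_abs)
  also have "\<dots> \<le> (\<Sum>j<n. \<Sum>k<n. cmod (A $$ (j, k)) * cmod (f $ k))"
    using A f by (intro sum_mono)
      (auto simp: scalar_prod_def lessThan_atLeast0 norm_mult intro!: order_trans[OF norm_sum])
  also have "\<dots> \<le> (\<Sum>j<n. \<Sum>k<n. cmod (A $$ (j, k)))"
    using f component_le_hnorm[of _ n f]
    by (intro sum_mono mult_right_le_one_le) fastforce+
  finally show ?thesis .
qed

lemma op_norm_bdd_above:
  "A \<in> carrier_mat n n \<Longrightarrow> bdd_above {hnorm n (A *\<^sub>v f) | f. f \<in> hspace K n \<and> hnorm n f \<le> 1}"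
  by (rule bdd_aboveI[where M = "\<Sum>j<n. \<Sum>k<n. cmod (A $$ (j, k))"])
     (auto intro!: hnorm_mult_mat_vec_le hspace_carrier)

lemma op_norm_upper:
  assumes "A \<in> carrier_mat n n" "f \<in> hspace K n" "hnorm n f \<le> 1"
  shows "hnorm n (A *\<^sub>v f) \<le> op_norm K n A"
  unfolding op_norm_def using assms by (intro cSup_upper op_norm_bdd_above) auto

lemma op_norm_nonneg: "0 \<in> K \<Longrightarrow> A \<in> carrier_mat n n \<Longrightarrow> 0 \<le> op_norm K n A"
  using op_norm_upper[of A n "0\<^sub>v n" K] hnorm_nonneg[of n "A *\<^sub>v 0\<^sub>v n"] zero_hspace by fastforce

lemma op_norm_lincomb_le:
  assumes K: "0 \<in> K" and A: "A \<in> carrier_mat n n" and B: "B \<in> carrier_mat n n"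
  shows "op_norm K n (a \<cdot>\<^sub>m A + b \<cdot>\<^sub>m B) \<le> cmod a * op_norm K n A + cmod b * op_norm K n B"
  unfolding op_norm_def[of K n "a \<cdot>\<^sub>m A + b \<cdot>\<^sub>m B"]
proof (rule cSup_least)
  show "{hnorm n ((a \<cdot>\<^sub>m A + b \<cdot>\<^sub>m B) *\<^sub>v f) | f. f \<in> hspace K n \<and> hnorm n f \<le> 1} \<noteq> {}"
    using zero_hspace[OF K] by fastforce
next
  fix x assume "x \<in> {hnorm n ((a \<cdot>\<^sub>m A + b \<cdot>\<^sub>m B) *\<^sub>v f) | f. f \<in> hspace K n \<and> hnorm n f \<le> 1}"
  then obtain f where f: "f \<in> hspace K n" "hnorm n f \<le> 1"
    and x: "x = hnorm n ((a \<cdot>\<^sub>m A + b \<cdot>\<^sub>m B) *\<^sub>v f)" by auto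
  have fc: "f \<in> carrier_vec n" using f(1) by (rule hspace_carrier)
  have mult: "(a \<cdot>\<^sub>m A + b \<cdot>\<^sub>m B) *\<^sub>v f = a \<cdot>\<^sub>v (A *\<^sub>v f) + b \<cdot>\<^sub>v (B *\<^sub>v f)"
    using A B fc by (intro eq_vecI)
      (auto simp: scalar_prod_def sum.distrib sum_distrib_left algebra_simps)
  have "x \<le> hnorm n (a \<cdot>\<^sub>v (A *\<^sub>v f)) + hnorm n (b \<cdot>\<^sub>v (B *\<^sub>v f))"
    unfolding x mult using A B fc by (intro hnorm_triangle) auto
  also have "\<dots> = cmod a * hnorm n (A *\<^sub>v f) + cmod b * hnorm n (B *\<^sub>v f)"
    using A B fc by (simp add: hnorm_smult)
  also have "\<dots> \<le> cmod a * op_norm K n A + cmod b * op_norm K n B"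
    using op_norm_upper[OF A f] op_norm_upper[OF B f] by (intro add_mono mult_left_mono) auto
  finally show "x \<le> cmod a * op_norm K n A + cmod b * op_norm K n B" .
qed

lemma spectral_radius_nonneg:
  assumes "A \<in> carrier_mat n n" "0 < n"
  shows "0 \<le> spectral_radius A"
proof -
  obtain \<mu> where "spectral_radius A = cmod \<mu>"
    using spectral_radius_mem_max(1)[OF assms] by blast
  then show ?thesis by simp
qed

(* An eigenvector v of u w^T satisfies (w \<bullet> v) u = \<mu> v; pairing with w gives \<mu> = w \<bullet> u
   unless w \<bullet> v = 0, and then \<mu> = 0. *)
lemma spectral_radius_rank_one:
  fixes u w :: "complex vec"
  assumes n: "0 < n" and u: "u \<in> carrier_vec n" and w: "w \<in> carrier_vec n"
  shows "spectral_radius (mat n n (\<lambda>(j, k). u $ j * w $ k)) = cmod (w \<bullet> u)"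
proof -
  define M where "M = mat n n (\<lambda>(j, k). u $ j * w $ k)"
  have M: "M \<in> carrier_mat n n" unfolding M_def by simp
  have M_mult: "M *\<^sub>v v = (w \<bullet> v) \<cdot>\<^sub>v u" if "v \<in> carrier_vec n" for v
    using that u w unfolding M_def
    by (intro eq_vecI) (auto simp: scalar_prod_def sum_distrib_left mult_ac)
  have eigenvalues: "\<mu> = 0 \<or> \<mu> = w \<bullet> u" if \<mu>: "\<mu> \<in> spectrum M" for \<mu>
  proof -
    obtain v where v: "v \<in> carrier_vec n" "v \<noteq> 0\<^sub>v n" "M *\<^sub>v v = \<mu> \<cdot>\<^sub>v v"
      using \<mu> unfolding M_def by (auto simp: spectrum_def eigenvalue_def eigenvector_def)
    then have v: "v \<in> carrier_vec n" "v \<noteq> 0\<^sub>v n" "(w \<bullet> v) \<cdot>\<^sub>v u = \<mu> \<cdot>\<^sub>v v"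
      using M_mult by auto
    have "(w \<bullet> v) * (w \<bullet> u) = \<mu> * (w \<bullet> v)"
      using arg_cong[OF v(3), of "scalar_prod w"] u v(1) w by simp
    moreover have "\<mu> = 0" if "w \<bullet> v = 0"
    proof -
      obtain j where "j < n" "v $ j \<noteq> 0" using v(1,2) by (metis eq_vecI carrier_vecD index_zero_vec)
      then show ?thesis using arg_cong[OF v(3), of "\<lambda>x. x $ j"] \<open>w \<bullet> v = 0\<close> u v(1) by simp
    qed
    ultimately show ?thesis by (metis mult.commute mult_cancel_left)
  qed
  obtain \<mu> where \<mu>: "\<mu> \<in> spectrum M" "spectral_radius M = cmod \<mu>"
    using spectral_radius_mem_max(1)[OF M n] by auto
  show ?thesis
  proof (cases "w \<bullet> u = 0")
    case True
    then show ?thesis using \<mu> eigenvalues unfolding M_def by force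
  next
    case False
    then have "u \<noteq> 0\<^sub>v n" using w by auto
    then have "w \<bullet> u \<in> spectrum M"
      using M M_mult[OF u] u unfolding spectrum_def eigenvalue_def eigenvector_def by auto
    then have "cmod (w \<bullet> u) \<le> spectral_radius M"
      by (intro spectral_radius_mem_max(2)[OF M n]) auto
    moreover have "spectral_radius M \<le> cmod (w \<bullet> u)"
      using \<mu> eigenvalues by force
    ultimately show ?thesis unfolding M_def by simp
  qed
qed

lemma err_op_carrier: "err_op n N p \<Lambda> F G \<in> carrier_mat n n"
  unfolding err_op_def by simp

lemma err_op_dim_0: "err_op 0 N p \<Lambda> F G = 0\<^sub>m 0 0"
  unfolding err_op_def by (rule eq_matI) auto

lemma err_op_lincomb:
  assumes "\<And>i. i \<in> \<Lambda> \<Longrightarrow> U i \<in> carrier_vec n" "\<And>i. i \<in> \<Lambda> \<Longrightarrow> W i \<in> carrier_vec n"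
  shows "err_op n N p \<Lambda> F (\<lambda>i. a \<cdot>\<^sub>v U i + b \<cdot>\<^sub>v W i)
       = a \<cdot>\<^sub>m err_op n N p \<Lambda> F U + b \<cdot>\<^sub>m err_op n N p \<Lambda> F W"
proof (rule eq_matI)
  fix j k assume "j < dim_row (a \<cdot>\<^sub>m err_op n N p \<Lambda> F U + b \<cdot>\<^sub>m err_op n N p \<Lambda> F W)"
    and "k < dim_col (a \<cdot>\<^sub>m err_op n N p \<Lambda> F U + b \<cdot>\<^sub>m err_op n N p \<Lambda> F W)"
  then have j: "j < n" and k: "k < n" by (simp_all add: err_op_def)
  have "(a \<cdot>\<^sub>v U i + b \<cdot>\<^sub>v W i) $ j = a * U i $ j + b * W i $ j" if "i \<in> \<Lambda>" for i
    using assms that j by (intro index_lincomb_vec) auto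
  then show "err_op n N p \<Lambda> F (\<lambda>i. a \<cdot>\<^sub>v U i + b \<cdot>\<^sub>v W i) $$ (j, k)
      = (a \<cdot>\<^sub>m err_op n N p \<Lambda> F U + b \<cdot>\<^sub>m err_op n N p \<Lambda> F W) $$ (j, k)"
    unfolding err_op_def using j k
    by (simp add: sum.distrib sum_distrib_left algebra_simps cong: sum.cong)
qed (simp_all add: err_op_def)

lemma spectral_radius_err_op_singleton:
  assumes "0 < n" "G i \<in> carrier_vec n"
  shows "spectral_radius (err_op n N p {i} F G) = \<bar>weight n N p i\<bar> * cmod (hinner n (G i) (F i))"
proof -
  define w where "w = vec n (\<lambda>k. of_real (weight n N p i) * cnj (F i $ k))"
  have "err_op n N p {i} F G = mat n n (\<lambda>(j, k). G i $ j * w $ k)"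
    unfolding err_op_def w_def by (intro eq_matI) auto
  moreover have "w \<bullet> G i = of_real (weight n N p i) * hinner n (G i) (F i)"
    unfolding w_def hinner_def scalar_prod_def
    using assms(2) by (auto simp: lessThan_atLeast0 sum_distrib_left mult_ac intro!: sum.cong)
  ultimately show ?thesis
    using spectral_radius_rank_one[OF assms, of w] by (simp add: w_def norm_mult)
qed

definition avg_error ::
    "complex set \<Rightarrow> nat \<Rightarrow> nat \<Rightarrow> (nat \<Rightarrow> real) \<Rightarrow> (nat \<Rightarrow> complex vec) \<Rightarrow> nat set \<Rightarrow> (nat \<Rightarrow> complex vec) \<Rightarrow> real"
  where "avg_error K n N p F \<Lambda> G =
    (op_norm K n (err_op n N p \<Lambda> F G) + spectral_radius (err_op n N p \<Lambda> F G)) / 2"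

lemma AP1_eq_Max_singletons: "AP1 K n N p F G = Max ((\<lambda>i. avg_error K n N p F {i} G) ` {1..N})"
proof -
  have "{\<Lambda>. \<Lambda> \<subseteq> {1..N} \<and> card \<Lambda> = 1} = (\<lambda>i. {i}) ` {1..N}"
    by (auto simp: card_1_singleton_iff)
  then show ?thesis
    by (simp only: AP1_def avg_error_def setcompr_eq_image image_image)
qed

lemma avg_error_nonneg: "0 \<in> K \<Longrightarrow> 0 < n \<Longrightarrow> 0 \<le> avg_error K n N p F \<Lambda> G"
  unfolding avg_error_def using op_norm_nonneg spectral_radius_nonneg err_op_carrier
  by (metis add_nonneg_nonneg divide_nonneg_pos zero_less_numeral)

lemma avg_error_singleton_convex:
  assumes K: "0 \<in> K" and t: "0 \<le> t" "t \<le> 1"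
    and U: "U i \<in> carrier_vec n" and W: "W i \<in> carrier_vec n"
  shows "avg_error K n N p F {i} (\<lambda>i. of_real t \<cdot>\<^sub>v U i + of_real (1 - t) \<cdot>\<^sub>v W i)
       \<le> t * avg_error K n N p F {i} U + (1 - t) * avg_error K n N p F {i} W"
    (is "avg_error K n N p F {i} ?G \<le> _")
proof (cases "n = 0")
  case True
  then have "avg_error K n N p F {i} ?G = avg_error K n N p F {i} U"
    "avg_error K n N p F {i} W = avg_error K n N p F {i} U"
    unfolding avg_error_def by (simp_all add: err_op_dim_0)
  then show ?thesis by (simp add: algebra_simps)
next
  case False
  have "err_op n N p {i} F ?G = of_real t \<cdot>\<^sub>m err_op n N p {i} F U + of_real (1 - t) \<cdot>\<^sub>m err_op n N p {i} F W"
    using U W by (intro err_op_lincomb) auto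
  then have "op_norm K n (err_op n N p {i} F ?G)
      \<le> cmod (of_real t) * op_norm K n (err_op n N p {i} F U)
        + cmod (of_real (1 - t)) * op_norm K n (err_op n N p {i} F W)"
    by (simp only: op_norm_lincomb_le[OF K err_op_carrier err_op_carrier])
  then have "op_norm K n (err_op n N p {i} F ?G)
      \<le> t * op_norm K n (err_op n N p {i} F U) + (1 - t) * op_norm K n (err_op n N p {i} F W)"
    using t by (simp del: of_real_diff)
  moreover have "spectral_radius (err_op n N p {i} F ?G)
      \<le> t * spectral_radius (err_op n N p {i} F U) + (1 - t) * spectral_radius (err_op n N p {i} F W)"
  proof -
    have "cmod (hinner n (?G i) (F i))
        = cmod (of_real t * hinner n (U i) (F i) + of_real (1 - t) * hinner n (W i) (F i))"
      using U W by (simp only: hinner_lincomb_left)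
    also have "\<dots> \<le> t * cmod (hinner n (U i) (F i)) + (1 - t) * cmod (hinner n (W i) (F i))"
      using t by (intro order_trans[OF norm_triangle_ineq]) (simp add: norm_mult del: of_real_diff)
    finally have "\<bar>weight n N p i\<bar> * cmod (hinner n (?G i) (F i))
        \<le> \<bar>weight n N p i\<bar> * (t * cmod (hinner n (U i) (F i)) + (1 - t) * cmod (hinner n (W i) (F i)))"
      by (rule mult_left_mono) simp
    also have "\<dots> = t * (\<bar>weight n N p i\<bar> * cmod (hinner n (U i) (F i)))
        + (1 - t) * (\<bar>weight n N p i\<bar> * cmod (hinner n (W i) (F i)))"
      by (simp add: algebra_simps)
    finally show ?thesis
      using False U W by (simp add: spectral_radius_err_op_singleton)
  qed
  ultimately show ?thesis unfolding avg_error_def by (simp add: field_simps)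
qed

lemma AP1_convex:
  assumes K: "0 \<in> K" and N: "1 \<le> N" and t: "0 \<le> t" "t \<le> 1"
    and U: "\<And>i. i \<in> {1..N} \<Longrightarrow> U i \<in> carrier_vec n"
    and W: "\<And>i. i \<in> {1..N} \<Longrightarrow> W i \<in> carrier_vec n"
  shows "AP1 K n N p F (\<lambda>i. of_real t \<cdot>\<^sub>v U i + of_real (1 - t) \<cdot>\<^sub>v W i)
       \<le> t * AP1 K n N p F U + (1 - t) * AP1 K n N p F W"
  unfolding AP1_eq_Max_singletons
proof (rule Max.boundedI)
  fix x assume "x \<in> (\<lambda>i. avg_error K n N p F {i} (\<lambda>i. of_real t \<cdot>\<^sub>v U i + of_real (1 - t) \<cdot>\<^sub>v W i)) ` {1..N}"
  then obtain i where i: "i \<in> {1..N}"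
    and x: "x = avg_error K n N p F {i} (\<lambda>i. of_real t \<cdot>\<^sub>v U i + of_real (1 - t) \<cdot>\<^sub>v W i)" by auto
  have "x \<le> t * avg_error K n N p F {i} U + (1 - t) * avg_error K n N p F {i} W"
    unfolding x using U[OF i] W[OF i] by (rule avg_error_singleton_convex[OF K t])
  also have "\<dots> \<le> t * Max ((\<lambda>i. avg_error K n N p F {i} U) ` {1..N})
                 + (1 - t) * Max ((\<lambda>i. avg_error K n N p F {i} W) ` {1..N})"
    using i t by (intro add_mono mult_left_mono Max_ge) auto
  finally show "x \<le> \<dots>" .
qed (use N in auto)

lemma AP1_inf_le_AP1:
  assumes K: "0 \<in> K" and N: "1 \<le> N" and G: "is_dual K n N F G"
  shows "AP1_inf K n N p F \<le> AP1 K n N p F G"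
  unfolding AP1_inf_def
proof (rule cInf_lower)
  show "AP1 K n N p F G \<in> {AP1 K n N p F X | X. is_dual K n N F X}" using G by auto
  show "bdd_below {AP1 K n N p F X | X. is_dual K n N F X}"
  proof (cases "n = 0")
    case True
    (* The spectral radius of a 0 x 0 matrix is the junk value Max {}, so there is no lower
       bound 0; instead all error operators coincide. *)
    then have "AP1 K n N p F G \<le> AP1 K n N p F X" for X
      unfolding AP1_def by (simp add: err_op_dim_0)
    then show ?thesis
      by (intro bdd_belowI[where m = "AP1 K n N p F G"]) auto
  next
    case False
    have "0 \<le> AP1 K n N p F X" for X
      unfolding AP1_eq_Max_singletons using N False
      by (intro order_trans[OF avg_error_nonneg[OF K] Max_ge]) auto
    then show ?thesis
      by (intro bdd_belowI[where m = 0]) auto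
  qed
qed

theorem theorem3p1:
  fixes K :: "complex set" and n N :: nat and p :: "nat \<Rightarrow> real" and F :: "nat \<Rightarrow> complex vec"
  assumes "K = \<real> \<or> K = UNIV"
    and "is_frame K n N F"
    and "is_prob_seq N p"
    and "G1 \<in> PASOD1 K n N p F" and "G2 \<in> PASOD1 K n N p F"
    and "0 \<le> t" and "t \<le> (1::real)"
  shows "(\<lambda>i. complex_of_real t \<cdot>\<^sub>v G1 i + complex_of_real (1 - t) \<cdot>\<^sub>v G2 i) \<in> PASOD1 K n N p F"
    (is "?G \<in> _")
proof -
  have K: "0 \<in> K" using assms(1) by auto
  have N: "1 \<le> N" using assms(3) unfolding is_prob_seq_def by (cases N) auto
  have G1: "is_dual K n N F G1" "AP1 K n N p F G1 = AP1_inf K n N p F"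
    and G2: "is_dual K n N F G2" "AP1 K n N p F G2 = AP1_inf K n N p F"
    using assms(4,5) unfolding PASOD1_def by auto
  have dual: "is_dual K n N F ?G"
    using is_dual_affine_comb[OF assms(1,2) G1(1) G2(1), of t "1 - t"] by simp
  have "AP1 K n N p F ?G \<le> t * AP1 K n N p F G1 + (1 - t) * AP1 K n N p F G2"
    using G1(1) G2(1) is_frame_carrier unfolding is_dual_def
    by (intro AP1_convex[OF K N assms(6,7)]) auto
  also have "\<dots> = AP1_inf K n N p F"
    unfolding G1(2) G2(2) by (simp add: algebra_simps)
  finally have "AP1 K n N p F ?G = AP1_inf K n N p F"
    using AP1_inf_le_AP1[OF K N dual, where p = p] by (rule antisym)
  then show ?thesis
    using dual unfolding PASOD1_def by simp
qed

end
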